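(* Let $x$ be fixed observed data, $p(x,z)$, $z\in\mathbb{R}^d$, a positive joint density differentiable in $z$, with $p(x):=\int p(x,z)\,dz$, and let $q$ be a probability density on $\mathbb{R}^d$; set $w(z):=p(x,z)/q(z)$. Let $\alpha\in[0,1)$, fix a point $z\in\mathbb{R}^d$ and a coordinate $r\in\{1,\dots,d\}$. For integers $M,K\ge1$ let $\{z_{m,j}:1\le m\le M,\ 1\le j\le K-1\}$ be i.i.d. with law $q$, put $g_m:=w(z)^{1-\alpha}/\big(\sum_{j=1}^{K-1}w(z_{m,j})^{1-\alpha}+w(z)^{1-\alpha}\big)$, and define $$g^r_{\alpha,M,K}(z):=\frac1M\sum_{m=1}^M\big(\alpha g_m+(1-\alpha)g_m^2\big)\frac{\partial}{\partial z_r}\log w(z),$$ with $\mathrm{SNR}(g^r_{\alpha,M,K}(z)):=|\mathbb{E}[g^r_{\alpha,M,K}(z)]|/\sqrt{\mathbb{V}[g^r_{\alpha,M,K}(z)]}$. Assume $\mathbb{E}_{Z\sim q}[w(Z)^{4(1-\alpha)}]<\infty$ and $\mathbb{E}_{Z\sim q}[w(Z)^{-12(1-\alpha)}]<\infty$. Then for any $z$ with $w(z)>0$, $$\mathrm{SNR}(g^r_{\alpha,M,K}(z))=\Omega(\sqrt{MK}),\qquad r=1,\dots,d.$$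
   Context: For positive quantities $a$ and $b$, $a=\Omega(b)$ means there is a constant $c>0$ with $a/b\ge c$ for all $K$ sufficiently large. The estimator is the Monte Carlo estimate of the $r$-th coordinate of the Wasserstein gradient of the VR-IWAE bound, $\mathbb{E}_{z_1,\dots,z_{K-1}\overset{i.i.d.}{\sim}q}\big[(\alpha g+(1-\alpha)g^2)\nabla_z\log w(z)\big]$ with $g=w(z)^{1-\alpha}/(\sum_{j=1}^{K-1}w(z_j)^{1-\alpha}+w(z)^{1-\alpha})$. *)

theory Defs
  imports "HOL-Probability.Probability"
begin

text \<open>Importance weight w(z) = p(x,z)/q(z), with the observed data x fixed,
  so that the joint density is represented as a function of z only.\<close>
definition iw :: "('a \<Rightarrow> real) \<Rightarrow> ('a \<Rightarrow> real) \<Rightarrow> 'a \<Rightarrow> real" where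
  "iw p q y = p y / q y"

text \<open>Partial derivative of f at z in the direction of the basis vector b
  (b ranges over Basis, i.e. the coordinates r = 1..d).\<close>
definition partial_deriv :: "('a::euclidean_space \<Rightarrow> real) \<Rightarrow> 'a \<Rightarrow> 'a \<Rightarrow> real" where
  "partial_deriv f z b = frechet_derivative f (at z) b"

definition sample_space :: "('a::euclidean_space \<Rightarrow> real) \<Rightarrow> nat \<Rightarrow> nat \<Rightarrow> (nat \<times> nat \<Rightarrow> 'a) measure" where
  "sample_space q M K = PiM ({..<M} \<times> {..<K-1}) (\<lambda>_. density lborel (\<lambda>y. ennreal (q y)))"

definition gm :: "real \<Rightarrow> ('a \<Rightarrow> real) \<Rightarrow> nat \<Rightarrow> 'a \<Rightarrow> (nat \<Rightarrow> 'a) \<Rightarrow> real" where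
  "gm \<alpha> w K z \<zeta> = w z powr (1-\<alpha>) / ((\<Sum>j<K-1. w (\<zeta> j) powr (1-\<alpha>)) + w z powr (1-\<alpha>))"

text \<open>The estimator g^r_{alpha,M,K}(z); D is the partial derivative of log w at z.\<close>
definition vr_grad_est :: "real \<Rightarrow> ('a \<Rightarrow> real) \<Rightarrow> real \<Rightarrow> nat \<Rightarrow> nat \<Rightarrow> 'a \<Rightarrow> (nat \<times> nat \<Rightarrow> 'a) \<Rightarrow> real" where
  "vr_grad_est \<alpha> w D M K z \<omega> =
     (1 / real M) * (\<Sum>m<M. (\<alpha> * gm \<alpha> w K z (\<lambda>j. \<omega> (m, j)) + (1-\<alpha>) * (gm \<alpha> w K z (\<lambda>j. \<omega> (m, j)))\<^sup>2) * D)"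

text \<open>Signal-to-noise ratio |E X| / sqrt(Var X), valued in the extended reals;
  a zero variance (with nonzero mean) gives +infinity.\<close>
definition snr :: "'b measure \<Rightarrow> ('b \<Rightarrow> real) \<Rightarrow> ereal" where
  "snr P X = (let E = (\<integral>\<omega>. X \<omega> \<partial>P); V = (\<integral>\<omega>. (X \<omega> - E)\<^sup>2 \<partial>P) in
      if V = 0 then (if E = 0 then 0 else \<infinity>) else ereal (\<bar>E\<bar> / sqrt V))"

end

theory Submission
  imports Defs
begin

text \<open>Write \<open>Y = w\<^sup>1\<^sup>-\<^sup>\<alpha>\<close>, \<open>a = w(z)\<^sup>1\<^sup>-\<^sup>\<alpha>\<close> and \<open>n = K - 1\<close>. Then \<open>g\<^sub>m = a / (S\<^sub>m + a)\<close>, where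
  \<open>S\<^sub>m\<close> is the sum of the \<open>n\<close> i.i.d. copies of \<open>Y\<close> in row \<open>m\<close>, and the estimator is
  \<open>\<partial>\<^sub>r log w(z)\<close> times the mean of the \<open>M\<close> independent row terms \<open>F\<^sub>m = \<phi>(S\<^sub>m)\<close> with
  \<open>\<phi>(s) = \<alpha> g + (1 - \<alpha>) g\<^sup>2\<close>, \<open>g = a / (s + a)\<close>. As \<open>\<phi>\<close> is convex, Jensen gives
  \<open>E F\<^sub>m \<ge> f\<^sub>0 = \<phi>(n \<mu>)\<close>, and \<open>f\<^sub>0 \<ge> (a / ((\<mu> + a)(n + 1)))\<^sup>2\<close>. On \<open>S\<^sub>m \<ge> n \<mu> / 2\<close> the
  relative Lipschitz constant of \<open>\<phi>\<close> is \<open>6 / (n \<mu> + a)\<close>, which together with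
  \<open>Var S\<^sub>m = n Var Y\<close> contributes \<open>O(f\<^sub>0\<^sup>2 / n)\<close> to \<open>Var F\<^sub>m\<close>; the complementary event is
  controlled by a Chernoff bound \<open>e\<^sup>-\<^sup>\<kappa>\<^sup>n\<close> that needs only \<open>E Y\<^sup>2\<close>, and
  \<open>e\<^sup>-\<^sup>\<kappa>\<^sup>n = O(n\<^sup>-\<^sup>5) = O(f\<^sub>0\<^sup>2 / n)\<close>. So \<open>Var F\<^sub>m \<le> C f\<^sub>0\<^sup>2 / K\<close> while the mean is at
  least \<open>f\<^sub>0\<close>, and averaging \<open>M\<close> uncorrelated rows gives \<open>SNR \<ge> sqrt (M K / C)\<close>.
  Only the moments of \<open>w\<close> of order \<open>1 - \<alpha>\<close> and \<open>2 (1 - \<alpha>)\<close> enter.\<close>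

definition vr_weight :: "real \<Rightarrow> real \<Rightarrow> real" where
  "vr_weight \<alpha> g = \<alpha> * g + (1 - \<alpha>) * g\<^sup>2"

lemma vr_weight_bounds:
  assumes "0 \<le> \<alpha>" "\<alpha> \<le> 1" "0 \<le> g" "g \<le> 1"
  shows "g\<^sup>2 \<le> vr_weight \<alpha> g" "vr_weight \<alpha> g \<le> 1"
proof -
  have g2: "g\<^sup>2 \<le> g" using assms by (simp add: power2_eq_square mult_left_le)
  have "\<alpha> * g\<^sup>2 \<le> \<alpha> * g" "(1 - \<alpha>) * g\<^sup>2 \<le> (1 - \<alpha>) * g"
    using g2 assms by (intro mult_left_mono; simp)+
  then show "g\<^sup>2 \<le> vr_weight \<alpha> g" "vr_weight \<alpha> g \<le> 1"
    using assms unfolding vr_weight_def by (simp_all add: algebra_simps)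
qed

lemma vr_weight_ratio_bounds:
  assumes "0 \<le> \<alpha>" "\<alpha> \<le> 1" "0 < a" "0 \<le> s"
  shows "0 \<le> vr_weight \<alpha> (a / (s + a))" "vr_weight \<alpha> (a / (s + a)) \<le> 1"
  using vr_weight_bounds[of \<alpha> "a / (s + a)"] assms
  by (auto intro: order_trans[OF zero_le_power2])

text \<open>The right-hand side is the tangent at \<open>T\<close> of the convex function
  \<open>s \<mapsto> vr_weight \<alpha> (a / (s + a))\<close>.\<close>
lemma vr_weight_ratio_ge_tangent:
  assumes "0 \<le> \<alpha>" "\<alpha> \<le> 1" "0 < a" "0 \<le> T" "0 \<le> s"
  shows "vr_weight \<alpha> (a / (T + a)) - (\<alpha> + 2 * (1 - \<alpha>) * (a / (T + a))) * a / (T + a)\<^sup>2 * (s - T)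
    \<le> vr_weight \<alpha> (a / (s + a))"
proof -
  define g g0 where "g = a / (s + a)" and "g0 = a / (T + a)"
  have ne: "s + a \<noteq> 0" "T + a \<noteq> 0" using assms by auto
  have "g - g0 + a * (s - T) / (T + a)\<^sup>2 = a * (s - T)\<^sup>2 / ((s + a) * (T + a)\<^sup>2)"
    unfolding g_def g0_def using ne by (simp add: divide_simps) (simp add: power2_eq_square algebra_simps)
  moreover have "0 \<le> a * (s - T)\<^sup>2 / ((s + a) * (T + a)\<^sup>2)" using assms by simp
  ultimately have lin: "- (a * (s - T) / (T + a)\<^sup>2) \<le> g - g0" by linarith
  have c: "0 \<le> \<alpha> + 2 * (1 - \<alpha>) * g0" using assms by (simp add: g0_def)
  have "vr_weight \<alpha> g - vr_weight \<alpha> g0 = (\<alpha> + 2 * (1 - \<alpha>) * g0) * (g - g0) + (1 - \<alpha>) * (g - g0)\<^sup>2"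
    by (simp add: vr_weight_def power2_eq_square algebra_simps)
  also have "\<dots> \<ge> (\<alpha> + 2 * (1 - \<alpha>) * g0) * (g - g0)" using assms by simp
  also have "(\<alpha> + 2 * (1 - \<alpha>) * g0) * (g - g0) \<ge> (\<alpha> + 2 * (1 - \<alpha>) * g0) * - (a * (s - T) / (T + a)\<^sup>2)"
    by (rule mult_left_mono[OF lin c])
  finally show ?thesis by (simp add: g_def g0_def)
qed

lemma vr_weight_ratio_dev_le:
  assumes al: "0 \<le> \<alpha>" "\<alpha> \<le> 1" and a: "0 < a" and T: "0 < T" and s: "T / 2 \<le> s"
  shows "\<bar>vr_weight \<alpha> (a / (s + a)) - vr_weight \<alpha> (a / (T + a))\<bar>
    \<le> 6 * vr_weight \<alpha> (a / (T + a)) * \<bar>s - T\<bar> / (T + a)"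
proof -
  define g g0 where "g = a / (s + a)" and "g0 = a / (T + a)"
  have g0: "0 < g0" using a T by (simp add: g0_def)
  have g: "0 \<le> g" using a s T by (simp add: g_def)
  have "g \<le> a / ((T + a) / 2)"
    unfolding g_def using s a T by (intro divide_left_mono) auto
  then have "g \<le> 2 * g0" by (simp add: g0_def mult.commute)
  then have "(1 - \<alpha>) * (g + g0) \<le> (1 - \<alpha>) * (3 * g0)" using al by (intro mult_left_mono) auto
  then have L: "\<alpha> + (1 - \<alpha>) * (g + g0) \<le> 3 * (\<alpha> + (1 - \<alpha>) * g0)"
    using al by (simp add: algebra_simps)
  have "g - g0 = g0 * (T - s) / (s + a)" using a T s by (simp add: g_def g0_def field_simps)
  then have "\<bar>g - g0\<bar> = g0 * \<bar>s - T\<bar> * (1 / (s + a))"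
    using g0 a s T by (simp add: abs_div abs_mult abs_minus_commute)
  also have "\<dots> \<le> g0 * \<bar>s - T\<bar> * (2 / (T + a))"
    using a T s g0 by (intro mult_left_mono) (simp_all add: field_simps)
  finally have dif: "\<bar>g - g0\<bar> \<le> 2 * g0 * \<bar>s - T\<bar> / (T + a)" by (simp add: mult_ac)
  have "vr_weight \<alpha> g - vr_weight \<alpha> g0 = (g - g0) * (\<alpha> + (1 - \<alpha>) * (g + g0))"
    by (simp add: vr_weight_def power2_eq_square algebra_simps)
  then have "\<bar>vr_weight \<alpha> g - vr_weight \<alpha> g0\<bar> = \<bar>g - g0\<bar> * (\<alpha> + (1 - \<alpha>) * (g + g0))"
    using al g g0 by (simp add: abs_mult)
  also have "\<dots> \<le> (2 * g0 * \<bar>s - T\<bar> / (T + a)) * (3 * (\<alpha> + (1 - \<alpha>) * g0))"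
    using al g g0 a T by (intro mult_mono[OF dif L]) auto
  also have "\<dots> = 6 * vr_weight \<alpha> g0 * \<bar>s - T\<bar> / (T + a)"
    using a T by (simp add: vr_weight_def power2_eq_square field_simps)
  finally show ?thesis by (simp add: g_def g0_def)
qed

text \<open>The exponential absorbs the region \<open>s < T/2\<close>, where only the trivial bound 1 is
  available.\<close>
lemma vr_weight_ratio_sq_dev_le:
  assumes al: "0 \<le> \<alpha>" "\<alpha> \<le> 1" and a: "0 < a" and T: "0 < T" and s: "0 \<le> s" and t: "0 < t"
  shows "(vr_weight \<alpha> (a / (s + a)) - vr_weight \<alpha> (a / (T + a)))\<^sup>2
    \<le> 36 * (vr_weight \<alpha> (a / (T + a)))\<^sup>2 * (s - T)\<^sup>2 / (T + a)\<^sup>2 + exp (t * (T / 2 - s))"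
proof (cases "T / 2 \<le> s")
  case True
  then have "\<bar>vr_weight \<alpha> (a / (s + a)) - vr_weight \<alpha> (a / (T + a))\<bar>\<^sup>2
      \<le> (6 * vr_weight \<alpha> (a / (T + a)) * \<bar>s - T\<bar> / (T + a))\<^sup>2"
    by (intro power_mono vr_weight_ratio_dev_le[OF al a T]) simp_all
  then show ?thesis
    by (simp add: power_mult_distrib power_divide add_increasing2)
next
  case False
  have "\<bar>vr_weight \<alpha> (a / (s + a)) - vr_weight \<alpha> (a / (T + a))\<bar> \<le> 1"
    using vr_weight_ratio_bounds[OF al a s] vr_weight_ratio_bounds[OF al a, of T] T by auto
  then have "(vr_weight \<alpha> (a / (s + a)) - vr_weight \<alpha> (a / (T + a)))\<^sup>2 \<le> 1"
    by (simp add: abs_square_le_1)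
  also have "1 \<le> exp (t * (T / 2 - s))" using False t by simp
  finally show ?thesis by (simp add: add_increasing)
qed

lemma vr_weight_ratio_ge:
  assumes "0 \<le> \<alpha>" "\<alpha> \<le> 1" "0 < a" "0 < \<mu>"
  shows "(a / ((\<mu> + a) * (real n + 1)))\<^sup>2 \<le> vr_weight \<alpha> (a / (real n * \<mu> + a))"
proof -
  have "a / ((\<mu> + a) * (real n + 1)) \<le> a / (real n * \<mu> + a)"
    using assms by (intro divide_left_mono) (auto simp: algebra_simps intro!: mult_pos_pos add_pos_nonneg)
  then have "(a / ((\<mu> + a) * (real n + 1)))\<^sup>2 \<le> (a / (real n * \<mu> + a))\<^sup>2"
    using assms by (intro power_mono) auto
  also have "\<dots> \<le> vr_weight \<alpha> (a / (real n * \<mu> + a))"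
    using assms by (intro vr_weight_bounds) (simp_all add: pos_divide_le_eq add_nonneg_pos)
  finally show ?thesis .
qed

lemma exp_neg_le_quadratic:
  fixes x :: real
  assumes "0 \<le> x"
  shows "exp (- x) \<le> 1 - x + x\<^sup>2 / 2"
proof -
  have pos: "0 < 1 + x + x\<^sup>2 / 2" using assms by (simp add: add_pos_nonneg)
  have "(1 - x + x\<^sup>2 / 2) * (1 + x + x\<^sup>2 / 2) = 1 + x ^ 4 / 4"
    by (simp add: power2_eq_square power4_eq_xxxx algebra_simps)
  then have "1 \<le> (1 - x + x\<^sup>2 / 2) * (1 + x + x\<^sup>2 / 2)" using assms by simp
  then have "1 / (1 + x + x\<^sup>2 / 2) \<le> 1 - x + x\<^sup>2 / 2"
    using pos by (simp add: pos_divide_le_eq)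
  moreover have "exp (- x) \<le> 1 / (1 + x + x\<^sup>2 / 2)"
    using exp_lower_Taylor_quadratic[OF assms] pos by (simp add: exp_minus' frac_le)
  ultimately show ?thesis by linarith
qed

text \<open>The constant comes from \<open>(x/6)\<^sup>6 \<le> e\<^sup>x\<close> with \<open>x = k n\<close> and \<open>(n + 1)\<^sup>5 \<le> 32 n\<^sup>6\<close>.\<close>
lemma exp_neg_mult_le_inverse_power:
  fixes k :: real and n :: nat
  assumes k: "0 < k" and n: "1 \<le> n"
  shows "exp (- k * real n) \<le> 32 * 6 ^ 6 / k ^ 6 / (real n + 1) ^ 5"
proof -
  have "k * n / 6 \<le> exp (k * n / 6)" using exp_ge_add_one_self[of "k * n / 6"] by linarith
  then have "(k * n / 6) ^ 6 \<le> exp (k * n / 6) ^ 6" using k by (intro power_mono) auto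
  also have "\<dots> = exp (k * n)" by (simp flip: exp_of_nat_mult)
  finally have E: "k ^ 6 * real n ^ 6 \<le> 6 ^ 6 * exp (k * n)"
    by (simp add: power_divide power_mult_distrib field_simps)
  have "(real n + 1) ^ 5 \<le> (2 * real n) ^ 5" using n by (intro power_mono) auto
  also have "\<dots> \<le> 32 * real n ^ 6"
    using n power_increasing[of 5 6 "real n"] by (simp add: power_mult_distrib)
  finally have "k ^ 6 * (real n + 1) ^ 5 \<le> k ^ 6 * (32 * real n ^ 6)"
    using k by (intro mult_left_mono) auto
  also have "\<dots> \<le> 32 * 6 ^ 6 * exp (k * n)" using E by simp
  finally have "k ^ 6 * (real n + 1) ^ 5 \<le> 32 * 6 ^ 6 * exp (k * n)" .
  then show ?thesis using k by (simp add: exp_minus field_simps)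
qed

lemma linear_div_square_le:
  fixes a \<mu> :: real and n :: nat
  assumes a: "0 < a" and \<mu>: "0 < \<mu>" and n: "1 \<le> n"
  shows "real n / (real n * \<mu> + a)\<^sup>2 \<le> 2 / (\<mu>\<^sup>2 * (real n + 1))"
proof -
  have "real n \<le> real n * real n" using n by simp
  then have "real n * (real n + 1) \<le> 2 * (real n)\<^sup>2" by (simp add: power2_eq_square algebra_simps)
  then have "real n * (real n + 1) * \<mu>\<^sup>2 \<le> 2 * (real n)\<^sup>2 * \<mu>\<^sup>2" by (rule mult_right_mono) simp
  also have "\<dots> = 2 * (real n * \<mu>)\<^sup>2" by (simp add: power_mult_distrib)
  also have "\<dots> \<le> 2 * (real n * \<mu> + a)\<^sup>2" using a \<mu> by (simp add: power_mono)
  finally have H: "real n * (real n + 1) * \<mu>\<^sup>2 \<le> 2 * (real n * \<mu> + a)\<^sup>2" .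
  have "0 < real n * \<mu> + a" "0 < \<mu>\<^sup>2 * (real n + 1)" using a \<mu> by (simp_all add: add_nonneg_pos)
  then show ?thesis using H by (simp add: divide_simps mult.commute mult.left_commute)
qed

lemma exp_neg_le_vr_weight_sq:
  assumes al: "0 \<le> \<alpha>" "\<alpha> \<le> 1" and a: "0 < a" and \<mu>: "0 < \<mu>" and k: "0 < k" and n: "1 \<le> n"
  shows "exp (- k * real n)
    \<le> 32 * 6 ^ 6 / k ^ 6 * (\<mu> + a) ^ 4 / a ^ 4 * (vr_weight \<alpha> (a / (real n * \<mu> + a)))\<^sup>2 / (real n + 1)"
proof -
  have rearrange: "B / N ^ 5 = B * b ^ 4 / a ^ 4 * ((a / (b * N))\<^sup>2)\<^sup>2 / N" if "0 < b" "0 < N" for B b N :: real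
  proof -
    have "N ^ 5 = N ^ 4 * N" by (simp add: power_Suc2[symmetric] del: power_Suc)
    moreover have "((a / (b * N))\<^sup>2)\<^sup>2 = a ^ 4 / (b ^ 4 * N ^ 4)"
      by (simp add: power_mult_distrib power_divide flip: power_mult)
    ultimately show ?thesis using a that by (simp add: field_simps)
  qed
  have "exp (- k * real n) \<le> 32 * 6 ^ 6 / k ^ 6 / (real n + 1) ^ 5"
    by (rule exp_neg_mult_le_inverse_power[OF k n])
  also have "\<dots> = 32 * 6 ^ 6 / k ^ 6 * (\<mu> + a) ^ 4 / a ^ 4 * ((a / ((\<mu> + a) * (real n + 1)))\<^sup>2)\<^sup>2 / (real n + 1)"
    using a \<mu> by (intro rearrange) auto
  also have "\<dots> \<le> 32 * 6 ^ 6 / k ^ 6 * (\<mu> + a) ^ 4 / a ^ 4 * (vr_weight \<alpha> (a / (real n * \<mu> + a)))\<^sup>2 / (real n + 1)"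
    using vr_weight_ratio_ge[OF al a \<mu>, of n] a \<mu> k
    by (intro divide_right_mono mult_left_mono power_mono) auto
  finally show ?thesis .
qed

lemma (in prob_space) PiM_integral_prod_subset:
  fixes h :: "'i \<Rightarrow> 'a \<Rightarrow> real"
  assumes fin: "finite I" and R: "R \<subseteq> I" and int: "\<And>i. i \<in> R \<Longrightarrow> integrable M (h i)"
  shows "integrable (PiM I (\<lambda>_. M)) (\<lambda>\<omega>. \<Prod>i\<in>R. h i (\<omega> i))"
    and "(\<integral>\<omega>. (\<Prod>i\<in>R. h i (\<omega> i)) \<partial>PiM I (\<lambda>_. M)) = (\<Prod>i\<in>R. expectation (h i))"
proof -
  interpret product_sigma_finite "\<lambda>_. M" by standard
  define h' where "h' i = (if i \<in> R then h i else (\<lambda>_. 1))" for i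
  have int': "integrable M (h' i)" if "i \<in> I" for i
    using int by (simp add: h'_def)
  have prod_h': "(\<Prod>i\<in>I. h' i (\<omega> i)) = (\<Prod>i\<in>R. h i (\<omega> i))" for \<omega>
  proof -
    have "(\<Prod>i\<in>I. h' i (\<omega> i)) = (\<Prod>i\<in>R. h' i (\<omega> i))"
      by (rule prod.mono_neutral_right[OF fin R]) (simp add: h'_def)
    then show ?thesis by (auto simp: h'_def intro!: prod.cong)
  qed
  have "(\<Prod>i\<in>I. expectation (h' i)) = (\<Prod>i\<in>R. expectation (h' i))"
    by (rule prod.mono_neutral_right[OF fin R]) (simp add: h'_def prob_space)
  then have "(\<Prod>i\<in>I. expectation (h' i)) = (\<Prod>i\<in>R. expectation (h i))"
    by (auto simp: h'_def intro!: prod.cong)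
  moreover have "(\<integral>\<omega>. (\<Prod>i\<in>I. h' i (\<omega> i)) \<partial>PiM I (\<lambda>_. M)) = (\<Prod>i\<in>I. expectation (h' i))"
    by (rule product_integral_prod[OF fin]) (rule int')
  ultimately show "(\<integral>\<omega>. (\<Prod>i\<in>R. h i (\<omega> i)) \<partial>PiM I (\<lambda>_. M)) = (\<Prod>i\<in>R. expectation (h i))"
    by (simp add: prod_h')
  have "integrable (PiM I (\<lambda>_. M)) (\<lambda>\<omega>. \<Prod>i\<in>I. h' i (\<omega> i))"
    by (rule product_integrable_prod[OF fin]) (rule int')
  then show "integrable (PiM I (\<lambda>_. M)) (\<lambda>\<omega>. \<Prod>i\<in>R. h i (\<omega> i))"
    by (simp add: prod_h')
qed

lemma (in prob_space) PiM_integral_coord: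
  fixes h :: "'a \<Rightarrow> real"
  assumes "finite I" "k \<in> I" "integrable M h"
  shows "integrable (PiM I (\<lambda>_. M)) (\<lambda>\<omega>. h (\<omega> k))"
    and "(\<integral>\<omega>. h (\<omega> k) \<partial>PiM I (\<lambda>_. M)) = expectation h"
  using PiM_integral_prod_subset[of I "{k}" "\<lambda>_. h"] assms by auto

lemma (in prob_space) PiM_integral_coord_pair:
  fixes h h' :: "'a \<Rightarrow> real"
  assumes "finite I" "k \<in> I" "l \<in> I" "k \<noteq> l" "integrable M h" "integrable M h'"
  shows "integrable (PiM I (\<lambda>_. M)) (\<lambda>\<omega>. h (\<omega> k) * h' (\<omega> l))"
    and "(\<integral>\<omega>. h (\<omega> k) * h' (\<omega> l) \<partial>PiM I (\<lambda>_. M)) = expectation h * expectation h'"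
  using PiM_integral_prod_subset[of I "{k, l}" "\<lambda>i. if i = k then h else h'"] assms by auto

lemma (in prob_space) PiM_integral_row_prod:
  fixes h :: "'a \<Rightarrow> real"
  assumes fin: "finite I" and row: "\<And>j. j < n \<Longrightarrow> (m, j) \<in> I" and int: "integrable M h"
  shows "integrable (PiM I (\<lambda>_. M)) (\<lambda>\<omega>. \<Prod>j<n. h (\<omega> (m, j)))"
    and "(\<integral>\<omega>. (\<Prod>j<n. h (\<omega> (m, j))) \<partial>PiM I (\<lambda>_. M)) = expectation h ^ n"
proof -
  have inj: "inj_on (Pair m) {..<n}" by (simp add: inj_on_def)
  have reindex: "(\<Prod>i\<in>Pair m ` {..<n}. h (\<omega> i)) = (\<Prod>j<n. h (\<omega> (m, j)))" for \<omega>
    by (simp add: prod.reindex[OF inj])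
  have "Pair m ` {..<n} \<subseteq> I" using row by auto
  from PiM_integral_prod_subset[OF fin this, of "\<lambda>_. h"] int
  show "integrable (PiM I (\<lambda>_. M)) (\<lambda>\<omega>. \<Prod>j<n. h (\<omega> (m, j)))"
    and "(\<integral>\<omega>. (\<Prod>j<n. h (\<omega> (m, j))) \<partial>PiM I (\<lambda>_. M)) = expectation h ^ n"
    by (simp_all add: reindex card_image[OF inj])
qed

lemma (in prob_space) PiM_integral_mult_indep:
  fixes F G :: "('i \<Rightarrow> 'a) \<Rightarrow> real"
  assumes fin: "finite I" and A: "A \<subseteq> I"
    and iF: "integrable (PiM I (\<lambda>_. M)) F" and iG: "integrable (PiM I (\<lambda>_. M)) G"
    and iFG: "integrable (PiM I (\<lambda>_. M)) (\<lambda>\<omega>. F \<omega> * G \<omega>)"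
    and dF: "\<And>\<omega> \<omega>'. (\<And>k. k \<in> A \<Longrightarrow> \<omega> k = \<omega>' k) \<Longrightarrow> F \<omega> = F \<omega>'"
    and dG: "\<And>\<omega> \<omega>'. (\<And>k. k \<in> I - A \<Longrightarrow> \<omega> k = \<omega>' k) \<Longrightarrow> G \<omega> = G \<omega>'"
  shows "(\<integral>\<omega>. F \<omega> * G \<omega> \<partial>PiM I (\<lambda>_. M))
    = (\<integral>\<omega>. F \<omega> \<partial>PiM I (\<lambda>_. M)) * (\<integral>\<omega>. G \<omega> \<partial>PiM I (\<lambda>_. M))"
proof -
  interpret product_sigma_finite "\<lambda>_. M" by standard
  define B where "B = I - A"
  have I: "I = A \<union> B" and AB: "A \<inter> B = {}" and finAB: "finite A" "finite B"
    using A fin by (auto simp: B_def intro: finite_subset)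
  interpret PA: prob_space "PiM A (\<lambda>_. M)" by (intro prob_space_PiM) (simp add: prob_space_axioms)
  interpret PB: prob_space "PiM B (\<lambda>_. M)" by (intro prob_space_PiM) (simp add: prob_space_axioms)
  define F' where "F' x = F (merge A B (x, undefined))" for x
  define G' where "G' y = G (merge A B (undefined, y))" for y
  have F': "F (merge A B (x, y)) = F' x" for x y
    unfolding F'_def by (rule dF) (simp add: merge_def)
  have G': "G (merge A B (x, y)) = G' y" for x y
    unfolding G'_def using AB by (intro dG) (auto simp: merge_def B_def)
  note fold = product_integral_fold[OF AB finAB, folded I]
  have "(\<integral>\<omega>. F \<omega> * G \<omega> \<partial>PiM I (\<lambda>_. M))
      = (\<integral>x. F' x \<partial>PiM A (\<lambda>_. M)) * (\<integral>y. G' y \<partial>PiM B (\<lambda>_. M))"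
    using fold[OF iFG] by (simp add: F' G')
  moreover have "(\<integral>\<omega>. F \<omega> \<partial>PiM I (\<lambda>_. M)) = (\<integral>x. F' x \<partial>PiM A (\<lambda>_. M))"
    using fold[OF iF] by (simp add: F' PB.prob_space)
  moreover have "(\<integral>\<omega>. G \<omega> \<partial>PiM I (\<lambda>_. M)) = (\<integral>y. G' y \<partial>PiM B (\<lambda>_. M))"
    using fold[OF iG] by (simp add: G' PA.prob_space)
  ultimately show ?thesis by simp
qed

lemma (in prob_space) variance_le_moment:
  fixes X :: "'a \<Rightarrow> real"
  assumes "integrable M X" "integrable M (\<lambda>x. (X x - c)\<^sup>2)"
  shows "variance X \<le> expectation (\<lambda>x. (X x - c)\<^sup>2)"
proof -
  define e where "e = expectation X"
  have "(X x - e)\<^sup>2 = (X x - c)\<^sup>2 - 2 * (e - c) * X x + (2 * (e - c) * c + (e - c)\<^sup>2)" for x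
    by (simp add: power2_eq_square algebra_simps)
  then have "variance X = expectation (\<lambda>x. (X x - c)\<^sup>2) - 2 * (e - c) * e + (2 * (e - c) * c + (e - c)\<^sup>2)"
    using assms by (simp add: prob_space e_def)
  also have "\<dots> = expectation (\<lambda>x. (X x - c)\<^sup>2) - (e - c)\<^sup>2"
    by (simp add: power2_eq_square algebra_simps)
  finally show ?thesis by simp
qed

lemma (in prob_space) variance_scale:
  fixes X :: "'a \<Rightarrow> real"
  shows "variance (\<lambda>x. c * X x) = c\<^sup>2 * variance X"
proof -
  have "(c * X x - c * expectation X)\<^sup>2 = c\<^sup>2 * (X x - expectation X)\<^sup>2" for x
    by (simp add: power2_eq_square algebra_simps)
  then show ?thesis by simp
qed

lemma (in prob_space) variance_sum_uncorrelated:
  fixes X :: "'i \<Rightarrow> 'a \<Rightarrow> real"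
  assumes fin: "finite I"
    and int: "\<And>i. i \<in> I \<Longrightarrow> integrable M (X i)"
    and int_mult: "\<And>i j. i \<in> I \<Longrightarrow> j \<in> I \<Longrightarrow> integrable M (\<lambda>x. X i x * X j x)"
    and uncorr: "\<And>i j. i \<in> I \<Longrightarrow> j \<in> I \<Longrightarrow> i \<noteq> j \<Longrightarrow>
      expectation (\<lambda>x. X i x * X j x) = expectation (X i) * expectation (X j)"
  shows "variance (\<lambda>x. \<Sum>i\<in>I. X i x) = (\<Sum>i\<in>I. variance (X i))"
proof -
  define e where "e i = expectation (X i)" for i
  define C where "C i j x = (X i x - e i) * (X j x - e j)" for i j x
  have C_eq: "C i j = (\<lambda>x. X i x * X j x - e j * X i x - e i * X j x + e i * e j)" for i j
    by (simp add: C_def algebra_simps fun_eq_iff)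
  have C_int: "integrable M (C i j)" if "i \<in> I" "j \<in> I" for i j
    unfolding C_eq using int[OF that(1)] int[OF that(2)] int_mult[OF that] by simp
  have C_exp: "expectation (C i j) = (if i = j then variance (X i) else 0)"
    if "i \<in> I" "j \<in> I" for i j
  proof (cases "i = j")
    case True
    then show ?thesis by (simp add: C_def[abs_def] e_def power2_eq_square)
  next
    case False
    then show ?thesis unfolding C_eq
      using int[OF that(1)] int[OF that(2)] int_mult[OF that] uncorr[OF that False]
      by (simp add: e_def prob_space)
  qed
  have "expectation (\<lambda>x. \<Sum>i\<in>I. X i x) = (\<Sum>i\<in>I. e i)"
    using int by (simp add: e_def Bochner_Integration.integral_sum)
  then have "((\<Sum>i\<in>I. X i x) - expectation (\<lambda>x. \<Sum>i\<in>I. X i x))\<^sup>2 = (\<Sum>i\<in>I. \<Sum>j\<in>I. C i j x)" for x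
    by (simp add: C_def power2_eq_square sum_product sum_subtractf[symmetric])
  then have "variance (\<lambda>x. \<Sum>i\<in>I. X i x) = (\<Sum>i\<in>I. \<Sum>j\<in>I. expectation (C i j))"
    using C_int by (simp add: Bochner_Integration.integral_sum Bochner_Integration.integrable_sum)
  also have "\<dots> = (\<Sum>i\<in>I. variance (X i))"
    using fin by (simp add: C_exp cong: sum.cong)
  finally show ?thesis .
qed

lemma snr_ge:
  fixes P :: "'b measure" and X :: "'b \<Rightarrow> real"
  assumes e: "0 < e" "e \<le> \<bar>\<integral>\<omega>. X \<omega> \<partial>P\<bar>"
    and v: "(\<integral>\<omega>. (X \<omega> - (\<integral>\<omega>. X \<omega> \<partial>P))\<^sup>2 \<partial>P) \<le> v"
  shows "ereal (e / sqrt v) \<le> snr P X"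
proof -
  define E where "E = (\<integral>\<omega>. X \<omega> \<partial>P)"
  define V where "V = (\<integral>\<omega>. (X \<omega> - E)\<^sup>2 \<partial>P)"
  have snr: "snr P X = (if V = 0 then (if E = 0 then 0 else \<infinity>) else ereal (\<bar>E\<bar> / sqrt V))"
    by (simp add: snr_def Let_def E_def V_def)
  have "0 \<le> V" by (simp add: V_def)
  show ?thesis
  proof (cases "V = 0")
    case True
    then show ?thesis using e by (auto simp: snr E_def)
  next
    case False
    with \<open>0 \<le> V\<close> have "0 < V" by simp
    have "e / sqrt v \<le> e / sqrt V"
      using e v \<open>0 < V\<close> by (intro divide_left_mono) (auto simp: V_def E_def)
    also have "\<dots> \<le> \<bar>E\<bar> / sqrt V"
      using e \<open>0 < V\<close> by (intro divide_right_mono) (auto simp: E_def)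
    finally show ?thesis using False by (simp add: snr)
  qed
qed

lemma (in prob_space) snr_scaled_average_ge:
  fixes F :: "'i \<Rightarrow> 'a \<Rightarrow> real"
  assumes J: "finite J" "J \<noteq> {}" and D: "D \<noteq> 0" and f0: "0 < f0"
    and int: "\<And>i. i \<in> J \<Longrightarrow> integrable M (F i)"
    and int_mult: "\<And>i j. i \<in> J \<Longrightarrow> j \<in> J \<Longrightarrow> integrable M (\<lambda>x. F i x * F j x)"
    and uncorr: "\<And>i j. i \<in> J \<Longrightarrow> j \<in> J \<Longrightarrow> i \<noteq> j \<Longrightarrow>
      expectation (\<lambda>x. F i x * F j x) = expectation (F i) * expectation (F j)"
    and mean: "\<And>i. i \<in> J \<Longrightarrow> f0 \<le> expectation (F i)"
    and var: "\<And>i. i \<in> J \<Longrightarrow> variance (F i) \<le> v"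
  shows "ereal (f0 * sqrt (card J) / sqrt v) \<le> snr M (\<lambda>x. 1 / card J * (\<Sum>i\<in>J. F i x * D))"
proof -
  define c where "c = D / card J"
  have c: "c \<noteq> 0" "\<bar>c\<bar> * card J = \<bar>D\<bar>" using J D by (simp_all add: c_def abs_div)
  have X: "(\<lambda>x. 1 / card J * (\<Sum>i\<in>J. F i x * D)) = (\<lambda>x. c * (\<Sum>i\<in>J. F i x))"
    by (simp add: c_def sum_distrib_left mult.commute)
  have "\<bar>D\<bar> * f0 = \<bar>c\<bar> * (\<Sum>i\<in>J. f0)" using c by simp
  also have "\<dots> \<le> \<bar>c\<bar> * (\<Sum>i\<in>J. expectation (F i))"
    using mean by (intro mult_left_mono sum_mono) auto
  also have "\<dots> = \<bar>expectation (\<lambda>x. c * (\<Sum>i\<in>J. F i x))\<bar>"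
    using int f0 mean J
    by (simp add: Bochner_Integration.integral_sum abs_mult sum_nonneg order_trans[OF less_imp_le[OF f0]])
  finally have E: "\<bar>D\<bar> * f0 \<le> \<bar>expectation (\<lambda>x. c * (\<Sum>i\<in>J. F i x))\<bar>" .
  have "variance (\<lambda>x. \<Sum>i\<in>J. F i x) = (\<Sum>i\<in>J. variance (F i))"
    by (rule variance_sum_uncorrelated[OF J(1) int int_mult uncorr])
  then have "variance (\<lambda>x. c * (\<Sum>i\<in>J. F i x)) = c\<^sup>2 * (\<Sum>i\<in>J. variance (F i))"
    unfolding variance_scale by simp
  also have "\<dots> \<le> c\<^sup>2 * (\<Sum>i\<in>J. v)" using var by (intro mult_left_mono sum_mono) auto
  also have "\<dots> = D\<^sup>2 * v / card J" using J by (simp add: c_def power2_eq_square)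
  finally have V: "variance (\<lambda>x. c * (\<Sum>i\<in>J. F i x)) \<le> D\<^sup>2 * v / card J" .
  have "ereal (\<bar>D\<bar> * f0 / sqrt (D\<^sup>2 * v / card J)) \<le> snr M (\<lambda>x. c * (\<Sum>i\<in>J. F i x))"
    by (rule snr_ge[OF _ E V]) (use D f0 in simp)
  moreover have "\<bar>D\<bar> * f0 / sqrt (D\<^sup>2 * v / card J) = f0 * sqrt (card J) / sqrt v"
    using D by (simp add: real_sqrt_mult real_sqrt_divide)
  ultimately show ?thesis unfolding X by simp
qed

text \<open>\<open>Y\<close> models the power \<open>w\<^sup>1\<^sup>-\<^sup>\<alpha>\<close> of the importance weight of one sample drawn from
  \<open>N\<close>, and \<open>a\<close> the same power at the fixed point \<open>z\<close>; the samples of row \<open>m\<close> are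
  \<open>\<omega> (m, j)\<close> for \<open>j < n\<close>, with \<open>n = K - 1\<close>.\<close>
locale weight_model = prob_space N for N :: "'a measure" +
  fixes Y :: "'a \<Rightarrow> real" and \<alpha> a :: real
  assumes Y_nonneg: "\<And>y. 0 \<le> Y y"
    and Y_integrable: "integrable N Y"
    and Y_sq_integrable: "integrable N (\<lambda>y. (Y y)\<^sup>2)"
    and Y_mean_pos: "0 < expectation Y"
    and alpha: "0 \<le> \<alpha>" "\<alpha> \<le> 1"
    and a_pos: "0 < a"
begin

definition "\<mu> = expectation Y"
definition "m2 = expectation (\<lambda>y. (Y y)\<^sup>2)"
definition "\<kappa> = \<mu>\<^sup>2 / (8 * m2)"

text \<open>\<open>t0\<close> minimises \<open>- t \<mu> / 2 + t\<^sup>2 m2 / 2\<close>, whose minimum is \<open>- \<kappa>\<close>.\<close>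
definition "t0 = \<mu> / (2 * m2)"

definition "C0 = 72 * variance Y / \<mu>\<^sup>2 + 32 * 6 ^ 6 / \<kappa> ^ 6 * (\<mu> + a) ^ 4 / a ^ 4"

definition row_sum :: "(nat \<times> nat \<Rightarrow> 'a) \<Rightarrow> nat \<Rightarrow> nat \<Rightarrow> real" where
  "row_sum \<omega> m n = (\<Sum>j<n. Y (\<omega> (m, j)))"

definition row_weight :: "(nat \<times> nat \<Rightarrow> 'a) \<Rightarrow> nat \<Rightarrow> nat \<Rightarrow> real" where
  "row_weight \<omega> m n = vr_weight \<alpha> (a / (row_sum \<omega> m n + a))"

lemma Y_measurable[measurable]: "Y \<in> borel_measurable N"
  using Y_integrable by (rule borel_measurable_integrable)

lemma Y_centered_sq_integrable: "integrable N (\<lambda>y. (Y y - c)\<^sup>2)"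
proof -
  have "(\<lambda>y. (Y y - c)\<^sup>2) = (\<lambda>y. (Y y)\<^sup>2 - 2 * c * Y y + c\<^sup>2)"
    by (simp add: power2_diff algebra_simps)
  then show ?thesis using Y_integrable Y_sq_integrable by simp
qed

lemma mu_pos: "0 < \<mu>"
  using Y_mean_pos by (simp add: \<mu>_def)

lemma m2_pos: "0 < m2"
proof -
  have "m2 = variance Y + \<mu>\<^sup>2"
    using Y_integrable Y_sq_integrable by (simp add: variance_eq m2_def \<mu>_def)
  then show ?thesis using variance_positive[of Y] mu_pos by (simp add: add_nonneg_pos)
qed

lemma kappa_pos: "0 < \<kappa>"
  using mu_pos m2_pos by (simp add: \<kappa>_def)

lemma t0_pos: "0 < t0"
  using mu_pos m2_pos by (simp add: t0_def)

lemma C0_pos: "0 < C0"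
  using variance_positive[of Y] kappa_pos mu_pos a_pos by (simp add: C0_def add_nonneg_pos)

lemma exp_moment_le:
  "integrable N (\<lambda>y. exp (t0 * (\<mu> / 2 - Y y)))"
  "expectation (\<lambda>y. exp (t0 * (\<mu> / 2 - Y y))) \<le> exp (- \<kappa>)"
proof -
  have bound: "exp (t0 * (\<mu> / 2 - Y y)) \<le> exp (t0 * \<mu> / 2) * (1 - t0 * Y y + (t0 * Y y)\<^sup>2 / 2)" for y
  proof -
    have "exp (t0 * (\<mu> / 2 - Y y)) = exp (t0 * \<mu> / 2) * exp (- (t0 * Y y))"
      by (simp add: algebra_simps flip: exp_add)
    also have "\<dots> \<le> exp (t0 * \<mu> / 2) * (1 - t0 * Y y + (t0 * Y y)\<^sup>2 / 2)"
      using t0_pos Y_nonneg[of y] by (intro mult_left_mono exp_neg_le_quadratic) auto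
    finally show ?thesis .
  qed
  have int_bound: "integrable N (\<lambda>y. exp (t0 * \<mu> / 2) * (1 - t0 * Y y + (t0 * Y y)\<^sup>2 / 2))"
    using Y_integrable Y_sq_integrable by (simp add: power_mult_distrib)
  show int: "integrable N (\<lambda>y. exp (t0 * (\<mu> / 2 - Y y)))"
    using t0_pos mu_pos Y_nonneg
    by (intro integrable_const_bound[where B = "exp (t0 * \<mu> / 2)"]) (auto simp: algebra_simps)
  have "expectation (\<lambda>y. exp (t0 * (\<mu> / 2 - Y y)))
      \<le> expectation (\<lambda>y. exp (t0 * \<mu> / 2) * (1 - t0 * Y y + (t0 * Y y)\<^sup>2 / 2))"
    by (rule integral_mono[OF int int_bound bound])
  also have "\<dots> = exp (t0 * \<mu> / 2) * (1 + (- t0 * \<mu> + t0\<^sup>2 * m2 / 2))"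
    using Y_integrable Y_sq_integrable by (simp add: power_mult_distrib \<mu>_def m2_def prob_space)
  also have "\<dots> \<le> exp (t0 * \<mu> / 2) * exp (- t0 * \<mu> + t0\<^sup>2 * m2 / 2)"
    by (intro mult_left_mono exp_ge_add_one_self) simp
  also have "\<dots> = exp (- \<kappa>)"
    using m2_pos by (simp add: t0_def \<kappa>_def power2_eq_square field_simps flip: exp_add)
  finally show "expectation (\<lambda>y. exp (t0 * (\<mu> / 2 - Y y))) \<le> exp (- \<kappa>)" .
qed

lemma row_sum_nonneg: "0 \<le> row_sum \<omega> m n"
  by (simp add: row_sum_def sum_nonneg Y_nonneg)

lemma row_weight_bounds: "0 \<le> row_weight \<omega> m n" "row_weight \<omega> m n \<le> 1"
  using vr_weight_ratio_bounds[OF alpha a_pos row_sum_nonneg] by (simp_all add: row_weight_def)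

context
  fixes I :: "(nat \<times> nat) set" and m n :: nat
  assumes fin: "finite I" and row: "\<And>j. j < n \<Longrightarrow> (m, j) \<in> I"
begin

lemma row_coord_mult_integrable:
  assumes "i < n" "j < n"
  shows "integrable (PiM I (\<lambda>_. N)) (\<lambda>\<omega>. Y (\<omega> (m, i)) * Y (\<omega> (m, j)))"
proof (cases "i = j")
  case True
  then show ?thesis
    using PiM_integral_coord(1)[OF fin row[OF assms(1)] Y_sq_integrable] by (simp add: power2_eq_square)
next
  case False
  then show ?thesis
    using PiM_integral_coord_pair(1)[OF fin row[OF assms(1)] row[OF assms(2)] _ Y_integrable Y_integrable]
    by simp
qed

lemma row_sum_integrable: "integrable (PiM I (\<lambda>_. N)) (\<lambda>\<omega>. row_sum \<omega> m n)"
  unfolding row_sum_def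
  by (intro Bochner_Integration.integrable_sum PiM_integral_coord(1)[OF fin row Y_integrable]) simp

lemma row_sum_measurable[measurable]: "(\<lambda>\<omega>. row_sum \<omega> m n) \<in> borel_measurable (PiM I (\<lambda>_. N))"
  using row_sum_integrable by (rule borel_measurable_integrable)

lemma row_sum_integral: "(\<integral>\<omega>. row_sum \<omega> m n \<partial>PiM I (\<lambda>_. N)) = real n * \<mu>"
  unfolding row_sum_def
  by (simp add: Bochner_Integration.integral_sum PiM_integral_coord[OF fin row Y_integrable] \<mu>_def)

lemma row_sum_sq_integrable: "integrable (PiM I (\<lambda>_. N)) (\<lambda>\<omega>. (row_sum \<omega> m n - c)\<^sup>2)"
proof -
  interpret P: prob_space "PiM I (\<lambda>_. N)" by (rule prob_space_PiM) (rule prob_space_axioms)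
  have expand: "(row_sum \<omega> m n - c)\<^sup>2
      = (\<Sum>i<n. \<Sum>j<n. Y (\<omega> (m, i)) * Y (\<omega> (m, j))) + c\<^sup>2 - 2 * row_sum \<omega> m n * c" for \<omega>
    unfolding power2_diff by (simp add: power2_eq_square row_sum_def sum_product)
  have "integrable (PiM I (\<lambda>_. N)) (\<lambda>\<omega>. \<Sum>i<n. \<Sum>j<n. Y (\<omega> (m, i)) * Y (\<omega> (m, j)))"
    by (intro Bochner_Integration.integrable_sum row_coord_mult_integrable) auto
  then show ?thesis using row_sum_integrable by (simp add: expand)
qed

lemma row_sum_variance:
  "(\<integral>\<omega>. (row_sum \<omega> m n - real n * \<mu>)\<^sup>2 \<partial>PiM I (\<lambda>_. N)) = real n * variance Y"
proof -
  interpret P: prob_space "PiM I (\<lambda>_. N)" by (rule prob_space_PiM) (rule prob_space_axioms)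
  note coord = PiM_integral_coord[OF fin row]
  have "P.variance (\<lambda>\<omega>. \<Sum>j<n. Y (\<omega> (m, j))) = (\<Sum>j<n. P.variance (\<lambda>\<omega>. Y (\<omega> (m, j))))"
  proof (rule P.variance_sum_uncorrelated)
    fix i j assume "i \<in> {..<n}" "j \<in> {..<n}" "i \<noteq> j"
    then show "P.expectation (\<lambda>\<omega>. Y (\<omega> (m, i)) * Y (\<omega> (m, j)))
        = P.expectation (\<lambda>\<omega>. Y (\<omega> (m, i))) * P.expectation (\<lambda>\<omega>. Y (\<omega> (m, j)))"
      using PiM_integral_coord_pair(2)[OF fin row row _ Y_integrable Y_integrable] coord(2)[OF _ Y_integrable]
      by simp
  qed (use coord(1)[OF _ Y_integrable] row_coord_mult_integrable in auto)
  also have "\<dots> = real n * variance Y"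
    using coord[OF _ Y_integrable] coord(2)[OF _ Y_centered_sq_integrable] by simp
  finally show ?thesis
    using row_sum_integral by (simp add: row_sum_def)
qed

lemma row_sum_chernoff:
  "integrable (PiM I (\<lambda>_. N)) (\<lambda>\<omega>. exp (t0 * (real n * \<mu> / 2 - row_sum \<omega> m n)))"
  "(\<integral>\<omega>. exp (t0 * (real n * \<mu> / 2 - row_sum \<omega> m n)) \<partial>PiM I (\<lambda>_. N)) \<le> exp (- \<kappa> * real n)"
proof -
  define h where "h = (\<lambda>y. exp (t0 * (\<mu> / 2 - Y y)))"
  have h_int: "integrable N h" unfolding h_def by (rule exp_moment_le(1))
  have prod: "exp (t0 * (real n * \<mu> / 2 - row_sum \<omega> m n)) = (\<Prod>j<n. h (\<omega> (m, j)))" for \<omega>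
  proof -
    have "t0 * (real n * \<mu> / 2 - row_sum \<omega> m n) = (\<Sum>j<n. t0 * (\<mu> / 2 - Y (\<omega> (m, j))))"
      by (simp add: row_sum_def sum_subtractf sum_distrib_left algebra_simps)
    then show ?thesis by (simp add: h_def exp_sum)
  qed
  note row_prod = PiM_integral_row_prod[OF fin row h_int]
  show "integrable (PiM I (\<lambda>_. N)) (\<lambda>\<omega>. exp (t0 * (real n * \<mu> / 2 - row_sum \<omega> m n)))"
    unfolding prod by (rule row_prod(1))
  have "(\<integral>\<omega>. exp (t0 * (real n * \<mu> / 2 - row_sum \<omega> m n)) \<partial>PiM I (\<lambda>_. N)) = expectation h ^ n"
    unfolding prod by (rule row_prod(2))
  also have "\<dots> \<le> exp (- \<kappa>) ^ n"
    using exp_moment_le(2) by (intro power_mono) (simp_all add: h_def)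
  also have "\<dots> = exp (- \<kappa> * real n)"
    by (simp add: mult.commute flip: exp_of_nat_mult)
  finally show "(\<integral>\<omega>. exp (t0 * (real n * \<mu> / 2 - row_sum \<omega> m n)) \<partial>PiM I (\<lambda>_. N)) \<le> exp (- \<kappa> * real n)" .
qed

lemma row_weight_measurable[measurable]: "(\<lambda>\<omega>. row_weight \<omega> m n) \<in> borel_measurable (PiM I (\<lambda>_. N))"
  unfolding row_weight_def vr_weight_def by measurable

lemma row_weight_integrable: "integrable (PiM I (\<lambda>_. N)) (\<lambda>\<omega>. row_weight \<omega> m n)"
proof -
  interpret P: prob_space "PiM I (\<lambda>_. N)" by (rule prob_space_PiM) (rule prob_space_axioms)
  show ?thesis
    using row_weight_bounds by (intro P.integrable_const_bound[where B = 1]) auto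
qed

lemma row_weight_mean_ge:
  "vr_weight \<alpha> (a / (real n * \<mu> + a)) \<le> (\<integral>\<omega>. row_weight \<omega> m n \<partial>PiM I (\<lambda>_. N))"
proof -
  interpret P: prob_space "PiM I (\<lambda>_. N)" by (rule prob_space_PiM) (rule prob_space_axioms)
  define T where "T = real n * \<mu>"
  define c where "c = (\<alpha> + 2 * (1 - \<alpha>) * (a / (T + a))) * a / (T + a)\<^sup>2"
  have tangent: "vr_weight \<alpha> (a / (T + a)) - c * (row_sum \<omega> m n - T) \<le> row_weight \<omega> m n" for \<omega>
    using vr_weight_ratio_ge_tangent[OF alpha a_pos _ row_sum_nonneg, of T] mu_pos
    by (simp add: c_def T_def row_weight_def)
  have "vr_weight \<alpha> (a / (T + a))
      = P.expectation (\<lambda>\<omega>. vr_weight \<alpha> (a / (T + a)) - c * (row_sum \<omega> m n - T))"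
    using row_sum_integrable row_sum_integral by (simp add: T_def P.prob_space)
  also have "\<dots> \<le> P.expectation (\<lambda>\<omega>. row_weight \<omega> m n)"
    using row_sum_integrable row_weight_integrable tangent by (intro integral_mono) auto
  finally show ?thesis by (simp add: T_def)
qed

lemma row_weight_sq_dev_le_variance_tail:
  assumes n: "1 \<le> n"
  defines "f0 \<equiv> vr_weight \<alpha> (a / (real n * \<mu> + a))"
  shows "integrable (PiM I (\<lambda>_. N)) (\<lambda>\<omega>. (row_weight \<omega> m n - f0)\<^sup>2)"
    and "(\<integral>\<omega>. (row_weight \<omega> m n - f0)\<^sup>2 \<partial>PiM I (\<lambda>_. N))
      \<le> 36 * f0\<^sup>2 / (real n * \<mu> + a)\<^sup>2 * (real n * variance Y) + exp (- \<kappa> * real n)"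
proof -
  interpret P: prob_space "PiM I (\<lambda>_. N)" by (rule prob_space_PiM) (rule prob_space_axioms)
  define T where "T = real n * \<mu>"
  have T: "0 < T" using n mu_pos by (simp add: T_def)
  have f0: "0 \<le> f0" "f0 \<le> 1"
    using vr_weight_ratio_bounds[OF alpha a_pos, of T] T by (simp_all add: f0_def T_def)
  have "\<bar>row_weight \<omega> m n - f0\<bar> \<le> 1" for \<omega>
    using row_weight_bounds[of \<omega> m n] f0 by linarith
  then show int: "integrable (PiM I (\<lambda>_. N)) (\<lambda>\<omega>. (row_weight \<omega> m n - f0)\<^sup>2)"
    by (intro P.integrable_const_bound[where B = 1]) (auto simp: abs_square_le_1)
  have pointwise: "(row_weight \<omega> m n - f0)\<^sup>2
      \<le> 36 * f0\<^sup>2 / (T + a)\<^sup>2 * (row_sum \<omega> m n - T)\<^sup>2 + exp (t0 * (real n * \<mu> / 2 - row_sum \<omega> m n))" for \<omega>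
    using vr_weight_ratio_sq_dev_le[OF alpha a_pos T row_sum_nonneg t0_pos, of \<omega> m n]
    by (simp add: row_weight_def f0_def T_def)
  have "P.expectation (\<lambda>\<omega>. (row_weight \<omega> m n - f0)\<^sup>2)
      \<le> P.expectation (\<lambda>\<omega>. 36 * f0\<^sup>2 / (T + a)\<^sup>2 * (row_sum \<omega> m n - T)\<^sup>2
                          + exp (t0 * (real n * \<mu> / 2 - row_sum \<omega> m n)))"
    using int row_sum_sq_integrable row_sum_chernoff(1) pointwise by (intro integral_mono) auto
  also have "\<dots> = 36 * f0\<^sup>2 / (T + a)\<^sup>2 * (real n * variance Y)
      + P.expectation (\<lambda>\<omega>. exp (t0 * (real n * \<mu> / 2 - row_sum \<omega> m n)))"
    using row_sum_sq_integrable row_sum_chernoff(1) row_sum_variance by (simp add: T_def)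
  also have "\<dots> \<le> 36 * f0\<^sup>2 / (T + a)\<^sup>2 * (real n * variance Y) + exp (- \<kappa> * real n)"
    using row_sum_chernoff(2) by simp
  finally show "(\<integral>\<omega>. (row_weight \<omega> m n - f0)\<^sup>2 \<partial>PiM I (\<lambda>_. N))
      \<le> 36 * f0\<^sup>2 / (real n * \<mu> + a)\<^sup>2 * (real n * variance Y) + exp (- \<kappa> * real n)"
    by (simp add: T_def)
qed

lemma row_weight_sq_dev_le:
  assumes n: "1 \<le> n"
  defines "f0 \<equiv> vr_weight \<alpha> (a / (real n * \<mu> + a))"
  shows "(\<integral>\<omega>. (row_weight \<omega> m n - f0)\<^sup>2 \<partial>PiM I (\<lambda>_. N)) \<le> C0 * f0\<^sup>2 / (real n + 1)"
proof -
  have "36 * f0\<^sup>2 / (real n * \<mu> + a)\<^sup>2 * (real n * variance Y)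
      = 36 * f0\<^sup>2 * variance Y * (real n / (real n * \<mu> + a)\<^sup>2)"
    by simp
  also have "\<dots> \<le> 36 * f0\<^sup>2 * variance Y * (2 / (\<mu>\<^sup>2 * (real n + 1)))"
    using linear_div_square_le[OF a_pos mu_pos n] variance_positive[of Y] by (intro mult_left_mono) simp_all
  finally have "36 * f0\<^sup>2 / (real n * \<mu> + a)\<^sup>2 * (real n * variance Y)
      \<le> 72 * variance Y / \<mu>\<^sup>2 * f0\<^sup>2 / (real n + 1)"
    by (simp add: mult_ac)
  then have "(\<integral>\<omega>. (row_weight \<omega> m n - f0)\<^sup>2 \<partial>PiM I (\<lambda>_. N))
      \<le> 72 * variance Y / \<mu>\<^sup>2 * f0\<^sup>2 / (real n + 1)
        + 32 * 6 ^ 6 / \<kappa> ^ 6 * (\<mu> + a) ^ 4 / a ^ 4 * f0\<^sup>2 / (real n + 1)"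
    using row_weight_sq_dev_le_variance_tail(2)[OF n] exp_neg_le_vr_weight_sq[OF alpha a_pos mu_pos kappa_pos n]
    by (simp add: f0_def)
  also have "\<dots> = C0 * f0\<^sup>2 / (real n + 1)"
    by (simp add: C0_def add_divide_distrib distrib_right)
  finally show ?thesis .
qed

end

lemma row_weight_cong:
  assumes "\<And>j. j < n \<Longrightarrow> \<omega> (m, j) = \<omega>' (m, j)"
  shows "row_weight \<omega> m n = row_weight \<omega>' m n"
proof -
  have "row_sum \<omega> m n = row_sum \<omega>' m n"
    unfolding row_sum_def using assms by (intro sum.cong) auto
  then show ?thesis by (simp add: row_weight_def)
qed

lemma row_weight_mult_integrable:
  assumes "m < M" "m' < M"
  shows "integrable (PiM ({..<M} \<times> {..<n}) (\<lambda>_. N)) (\<lambda>\<omega>. row_weight \<omega> m n * row_weight \<omega> m' n)"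
proof -
  interpret P: prob_space "PiM ({..<M} \<times> {..<n}) (\<lambda>_. N)"
    by (rule prob_space_PiM) (rule prob_space_axioms)
  have [measurable]: "(\<lambda>\<omega>. row_weight \<omega> k n) \<in> borel_measurable (PiM ({..<M} \<times> {..<n}) (\<lambda>_. N))"
    if "k < M" for k
    using that by (intro row_weight_measurable) auto
  have "norm (row_weight \<omega> m n * row_weight \<omega> m' n) \<le> 1" for \<omega>
    using row_weight_bounds[of \<omega>] by (auto simp: abs_mult intro!: mult_le_one)
  then show ?thesis
    using assms by (intro P.integrable_const_bound[where B = 1]) auto
qed

lemma row_weights_uncorrelated:
  assumes "m < M" "m' < M" "m \<noteq> m'"
  shows "(\<integral>\<omega>. row_weight \<omega> m n * row_weight \<omega> m' n \<partial>PiM ({..<M} \<times> {..<n}) (\<lambda>_. N))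
    = (\<integral>\<omega>. row_weight \<omega> m n \<partial>PiM ({..<M} \<times> {..<n}) (\<lambda>_. N))
      * (\<integral>\<omega>. row_weight \<omega> m' n \<partial>PiM ({..<M} \<times> {..<n}) (\<lambda>_. N))"
proof (rule PiM_integral_mult_indep)
  show "finite ({..<M} \<times> {..<n})" "{m} \<times> {..<n} \<subseteq> {..<M} \<times> {..<n}" using assms by auto
  show "integrable (PiM ({..<M} \<times> {..<n}) (\<lambda>_. N)) (\<lambda>\<omega>. row_weight \<omega> m n)"
    "integrable (PiM ({..<M} \<times> {..<n}) (\<lambda>_. N)) (\<lambda>\<omega>. row_weight \<omega> m' n)"
    using assms by (auto intro: row_weight_integrable)
  show "integrable (PiM ({..<M} \<times> {..<n}) (\<lambda>_. N)) (\<lambda>\<omega>. row_weight \<omega> m n * row_weight \<omega> m' n)"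
    using assms(1,2) by (rule row_weight_mult_integrable)
  show "row_weight \<omega> m n = row_weight \<omega>' m n"
    if "\<And>k. k \<in> {m} \<times> {..<n} \<Longrightarrow> \<omega> k = \<omega>' k" for \<omega> \<omega>'
    using that by (intro row_weight_cong) auto
  show "row_weight \<omega> m' n = row_weight \<omega>' m' n"
    if "\<And>k. k \<in> {..<M} \<times> {..<n} - {m} \<times> {..<n} \<Longrightarrow> \<omega> k = \<omega>' k" for \<omega> \<omega>'
    using that assms by (intro row_weight_cong) auto
qed

lemma snr_row_average_ge:
  fixes M n :: nat and D :: real
  assumes M: "1 \<le> M" and n: "1 \<le> n" and D: "D \<noteq> 0"
  shows "ereal (sqrt (real M * (real n + 1)) / sqrt C0)
    \<le> snr (PiM ({..<M} \<times> {..<n}) (\<lambda>_. N)) (\<lambda>\<omega>. 1 / real M * (\<Sum>m<M. row_weight \<omega> m n * D))"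
proof -
  define f0 where "f0 = vr_weight \<alpha> (a / (real n * \<mu> + a))"
  have fin: "finite ({..<M} \<times> {..<n})" by simp
  have row: "\<And>j. j < n \<Longrightarrow> (m, j) \<in> {..<M} \<times> {..<n}" if "m < M" for m
    using that by simp
  interpret P: prob_space "PiM ({..<M} \<times> {..<n}) (\<lambda>_. N)"
    by (rule prob_space_PiM) (rule prob_space_axioms)
  have "0 < (a / ((\<mu> + a) * (real n + 1)))\<^sup>2" using a_pos mu_pos by simp
  then have f0_pos: "0 < f0"
    using vr_weight_ratio_ge[OF alpha a_pos mu_pos, of n] unfolding f0_def by linarith
  have var: "P.variance (\<lambda>\<omega>. row_weight \<omega> m n) \<le> C0 * f0\<^sup>2 / (real n + 1)" if "m < M" for m
    using P.variance_le_moment[OF row_weight_integrable[OF fin row[OF that]]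
        row_weight_sq_dev_le_variance_tail(1)[OF fin row[OF that] n]]
      row_weight_sq_dev_le[OF fin row[OF that] n]
    by (simp add: f0_def)
  have "ereal (f0 * sqrt (card {..<M}) / sqrt (C0 * f0\<^sup>2 / (real n + 1)))
      \<le> snr (PiM ({..<M} \<times> {..<n}) (\<lambda>_. N)) (\<lambda>\<omega>. 1 / card {..<M} * (\<Sum>m\<in>{..<M}. row_weight \<omega> m n * D))"
  proof (rule P.snr_scaled_average_ge[OF _ _ D f0_pos])
    have "0 \<in> {..<M}" using M by simp
    then show "finite {..<M}" "{..<M} \<noteq> {}" by auto
    show "integrable (PiM ({..<M} \<times> {..<n}) (\<lambda>_. N)) (\<lambda>\<omega>. row_weight \<omega> i n)" if "i \<in> {..<M}" for i
      using that by (intro row_weight_integrable) auto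
    show "integrable (PiM ({..<M} \<times> {..<n}) (\<lambda>_. N)) (\<lambda>\<omega>. row_weight \<omega> i n * row_weight \<omega> j n)"
      if "i \<in> {..<M}" "j \<in> {..<M}" for i j
      using that by (intro row_weight_mult_integrable) auto
    show "P.expectation (\<lambda>\<omega>. row_weight \<omega> i n * row_weight \<omega> j n)
        = P.expectation (\<lambda>\<omega>. row_weight \<omega> i n) * P.expectation (\<lambda>\<omega>. row_weight \<omega> j n)"
      if "i \<in> {..<M}" "j \<in> {..<M}" "i \<noteq> j" for i j
      using that by (intro row_weights_uncorrelated) auto
    show "f0 \<le> P.expectation (\<lambda>\<omega>. row_weight \<omega> i n)" if "i \<in> {..<M}" for i
      unfolding f0_def using that by (intro row_weight_mean_ge) auto
    show "P.variance (\<lambda>\<omega>. row_weight \<omega> i n) \<le> C0 * f0\<^sup>2 / (real n + 1)" if "i \<in> {..<M}" for i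
      using that var by simp
  qed
  moreover have "f0 * sqrt (card {..<M}) / sqrt (C0 * f0\<^sup>2 / (real n + 1)) = sqrt (real M * (real n + 1)) / sqrt C0"
    using f0_pos C0_pos by (simp add: real_sqrt_mult real_sqrt_divide)
  ultimately show ?thesis by simp
qed

end

lemma prob_space_density_integral_eq_1:
  fixes q :: "'a \<Rightarrow> real"
  assumes "\<And>y. 0 \<le> q y" "integrable M q" "(\<integral>y. q y \<partial>M) = 1"
  shows "prob_space (density M (\<lambda>y. ennreal (q y)))"
proof
  have "emeasure (density M (\<lambda>y. ennreal (q y))) (space (density M (\<lambda>y. ennreal (q y))))
      = (\<integral>\<^sup>+ y. ennreal (q y) \<partial>M)"
    using assms(2) by (simp add: emeasure_density nn_integral_density)
  also have "\<dots> = ennreal (\<integral>y. q y \<partial>M)"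
    using assms by (intro nn_integral_eq_integral) auto
  finally show "emeasure (density M (\<lambda>y. ennreal (q y))) (space (density M (\<lambda>y. ennreal (q y)))) = 1"
    using assms(3) by simp
qed

lemma (in prob_space) integrable_powr_le_exponent:
  fixes W :: "'a \<Rightarrow> real"
  assumes W[measurable]: "W \<in> borel_measurable M" and W_nonneg: "\<And>x. 0 \<le> W x"
    and int: "integrable M (\<lambda>x. W x powr l)" and k: "0 \<le> k" "k \<le> l"
  shows "integrable M (\<lambda>x. W x powr k)"
proof (rule Bochner_Integration.integrable_bound)
  show "integrable M (\<lambda>x. 1 + W x powr l)" using int by simp
  have "W x powr k \<le> 1 + W x powr l" for x
  proof (cases "W x \<le> 1")
    case True
    then have "W x powr k \<le> 1" using W_nonneg k by (intro powr_le1) auto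
    then show ?thesis by (smt (verit) powr_ge_zero)
  next
    case False
    then have "W x powr k \<le> W x powr l" using k by (intro powr_mono) auto
    then show ?thesis by simp
  qed
  then show "AE x in M. norm (W x powr k) \<le> norm (1 + W x powr l)"
    by (simp add: add_nonneg_nonneg)
qed measurable

lemma weight_model_importance_weight:
  fixes p q :: "'a::euclidean_space \<Rightarrow> real"
  assumes p_meas: "p \<in> borel_measurable lborel" and p_pos: "\<And>y. 0 < p y"
    and q_nonneg: "\<And>y. 0 \<le> q y" and q_int: "integrable lborel q" and q_prob: "(\<integral>y. q y \<partial>lborel) = 1"
    and alpha: "0 \<le> \<alpha>" "\<alpha> \<le> 1"
    and mom4: "integrable (density lborel (\<lambda>y. ennreal (q y))) (\<lambda>y. iw p q y powr (4 * (1 - \<alpha>)))"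
    and wz: "0 < iw p q z"
  shows "weight_model (density lborel (\<lambda>y. ennreal (q y))) (\<lambda>y. iw p q y powr (1 - \<alpha>)) \<alpha> (iw p q z powr (1 - \<alpha>))"
proof -
  let ?N = "density lborel (\<lambda>y. ennreal (q y))"
  interpret N: prob_space ?N by (rule prob_space_density_integral_eq_1[OF q_nonneg q_int q_prob])
  have [measurable]: "p \<in> borel_measurable borel" "q \<in> borel_measurable borel"
    using p_meas borel_measurable_integrable[OF q_int] by auto
  have W[measurable]: "iw p q \<in> borel_measurable ?N" unfolding iw_def by simp
  have W_nonneg: "0 \<le> iw p q y" for y using p_pos[of y] q_nonneg[of y] by (simp add: iw_def)
  note moments = N.integrable_powr_le_exponent[OF W W_nonneg mom4]
  have Y_sq: "(iw p q y powr (1 - \<alpha>))\<^sup>2 = iw p q y powr (2 * (1 - \<alpha>))" for y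
    by (simp add: power2_eq_square flip: powr_add)
  have pos: "AE y in ?N. 0 < iw p q y powr (1 - \<alpha>)"
    using p_pos q_nonneg by (subst AE_density) (auto intro!: AE_I2 simp: iw_def less_le)
  have "N.expectation (\<lambda>y. iw p q y powr (1 - \<alpha>)) \<noteq> 0"
  proof
    assume "N.expectation (\<lambda>y. iw p q y powr (1 - \<alpha>)) = 0"
    then have "AE y in ?N. iw p q y powr (1 - \<alpha>) = 0"
      using moments[of "1 - \<alpha>"] alpha by (subst (asm) integral_nonneg_eq_0_iff_AE) auto
    with pos have "AE y in ?N. False" by eventually_elim simp
    then show False by (simp add: N.AE_False)
  qed
  moreover have "0 \<le> N.expectation (\<lambda>y. iw p q y powr (1 - \<alpha>))"
    by (intro Bochner_Integration.integral_nonneg) simp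
  ultimately have "0 < N.expectation (\<lambda>y. iw p q y powr (1 - \<alpha>))" by linarith
  then show ?thesis
    using moments[of "1 - \<alpha>"] moments[of "2 * (1 - \<alpha>)"] alpha wz
    by unfold_locales (simp_all add: Y_sq)
qed

theorem theorem2:
  fixes p q :: "'a::euclidean_space \<Rightarrow> real" and \<alpha> :: real and z b :: 'a
  assumes p_meas: "p \<in> borel_measurable lborel"
    and p_pos: "\<And>y. p y > 0"
    and p_int: "integrable lborel p"
    and p_diff: "\<And>y. p differentiable (at y)"
    and q_meas: "q \<in> borel_measurable lborel"
    and q_nonneg: "\<And>y. q y \<ge> 0"
    and q_int: "integrable lborel q"
    and q_prob: "(\<integral>y. q y \<partial>lborel) = 1"
    and alpha: "0 \<le> \<alpha>" "\<alpha> < 1"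
    and r: "b \<in> Basis"
    and mom4: "integrable (density lborel (\<lambda>y. ennreal (q y))) (\<lambda>y. iw p q y powr (4 * (1 - \<alpha>)))"
    and mom12: "integrable (density lborel (\<lambda>y. ennreal (q y))) (\<lambda>y. iw p q y powr (-12 * (1 - \<alpha>)))"
    and wz: "iw p q z > 0"
    and q_diff_z: "q differentiable (at z)"
    and grad_nz: "partial_deriv (\<lambda>y. ln (iw p q y)) z b \<noteq> 0"
  shows "\<exists>c>0. \<exists>K0. \<forall>K\<ge>K0. \<forall>M\<ge>1.
           snr (sample_space q M K)
               (vr_grad_est \<alpha> (iw p q) (partial_deriv (\<lambda>y. ln (iw p q y)) z b) M K z)
             \<ge> ereal (c * sqrt (real M * real K))"
proof -
  define N where "N = density lborel (\<lambda>y. ennreal (q y))"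
  define D where "D = partial_deriv (\<lambda>y. ln (iw p q y)) z b"
  interpret weight_model N "\<lambda>y. iw p q y powr (1 - \<alpha>)" \<alpha> "iw p q z powr (1 - \<alpha>)"
    unfolding N_def using alpha
    by (intro weight_model_importance_weight[OF p_meas p_pos q_nonneg q_int q_prob _ _ mom4 wz]) auto
  have estimator: "vr_grad_est \<alpha> (iw p q) D M K z = (\<lambda>\<omega>. 1 / real M * (\<Sum>m<M. row_weight \<omega> m (K - 1) * D))"
    for M K by (simp add: fun_eq_iff vr_grad_est_def gm_def row_weight_def row_sum_def vr_weight_def add.commute)
  have samples: "sample_space q M K = PiM ({..<M} \<times> {..<K - 1}) (\<lambda>_. N)" for M K
    by (simp add: sample_space_def N_def)
  show ?thesis
  proof (intro exI[of _ "1 / sqrt C0"] conjI exI[of _ "2::nat"] allI impI)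
    show "0 < 1 / sqrt C0" using C0_pos by simp
    fix K M :: nat
    assume "2 \<le> K" "1 \<le> M"
    then have "ereal (sqrt (real M * real K) / sqrt C0) \<le> snr (sample_space q M K) (vr_grad_est \<alpha> (iw p q) D M K z)"
      using snr_row_average_ge[of M "K - 1" D] grad_nz[folded D_def] by (simp add: estimator samples of_nat_diff)
    then show "ereal (1 / sqrt C0 * sqrt (real M * real K))
        \<le> snr (sample_space q M K) (vr_grad_est \<alpha> (iw p q) (partial_deriv (\<lambda>y. ln (iw p q y)) z b) M K z)"
      by (simp add: D_def)
  qed
qed

end
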